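(* Let $m\geq1$ and let $P,Q\in\mathbb{C}[X_k^{(i)}: k\geq1,\ 1\leq i\leq m]$, where $X_k^{(i)}$ has degree $k\bar e^{(i)}\in\mathbb{N}^m$ (the vector with $k$ in coordinate $i$ and $0$ elsewhere) and degrees of monomials add coordinatewise. Suppose every monomial of $P$ has degree $\leq \bar a$ and every monomial of $Q$ has degree $\leq\bar b$ (coordinatewise). Then the $S_{\bar n}$-inner product $\langle P,Q\rangle_{S_{\bar n}}=\frac{1}{|S_{\bar n}|}\sum_{\sigma\in S_{\bar n}}P(\sigma)\overline{Q(\sigma)}$ does not depend on $\bar n$ for all $\bar n\in\mathbb{N}^m$ with $\bar n\geq\bar a+\bar b$ coordinatewise.
   Context: For $\bar n=(n^{(1)},\dots,n^{(m)})\in\mathbb{N}^m$, $S_{\bar n}=S_{n^{(1)}}\times\cdots\times S_{n^{(m)}}$. The function $X_k^{(i)}$ on $S_{\bar n}$ (defined simultaneously for all $\bar n$) sends $(\sigma^{(1)},\dots,\sigma^{(m)})$ to the number of $k$-cycles of $\sigma^{(i)}$. *)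

theory Defs
  imports Complex_Main "HOL-Combinatorics.Permutations" "HOL-Combinatorics.Orbits" "HOL-Library.Poly_Mapping"
begin

definition num_cycles :: "(nat \<Rightarrow> nat) \<Rightarrow> nat \<Rightarrow> nat \<Rightarrow> nat" where
  "num_cycles p n k = card {orbit p x | x. x \<in> {..<n} \<and> card (orbit p x) = k}"

text \<open>S_nbar = S_{n(0)} x ... x S_{n(m-1)}, tuples represented as functions of the index i < m.\<close>
definition Sn :: "nat \<Rightarrow> (nat \<Rightarrow> nat) \<Rightarrow> (nat \<Rightarrow> nat \<Rightarrow> nat) set" where
  "Sn m n = {\<sigma>. (\<forall>i<m. \<sigma> i permutes {..<n i}) \<and> (\<forall>i\<ge>m. \<sigma> i = id)}"

text \<open>Polynomials in the variables X_k^(i), variable (i,k); a monomial is a finitely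
  supported exponent map (i,k) to exponent.\<close>
type_synonym cpoly = "((nat \<times> nat) \<Rightarrow>\<^sub>0 nat) \<Rightarrow>\<^sub>0 complex"

definition mono_deg :: "((nat \<times> nat) \<Rightarrow>\<^sub>0 nat) \<Rightarrow> nat \<Rightarrow> nat" where
  "mono_deg mo i = (\<Sum>v\<in>{v \<in> Poly_Mapping.keys mo. fst v = i}. snd v * Poly_Mapping.lookup mo v)"

definition eval_cpoly :: "cpoly \<Rightarrow> (nat \<Rightarrow> nat) \<Rightarrow> (nat \<Rightarrow> nat \<Rightarrow> nat) \<Rightarrow> complex" where
  "eval_cpoly P n \<sigma> = (\<Sum>mo\<in>Poly_Mapping.keys P. Poly_Mapping.lookup P mo *
      (\<Prod>v\<in>Poly_Mapping.keys mo. of_nat (num_cycles (\<sigma> (fst v)) (n (fst v)) (snd v)) ^ Poly_Mapping.lookup mo v))"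

definition inner_S :: "nat \<Rightarrow> (nat \<Rightarrow> nat) \<Rightarrow> cpoly \<Rightarrow> cpoly \<Rightarrow> complex" where
  "inner_S m n P Q = (1 / of_nat (card (Sn m n))) *
      (\<Sum>\<sigma>\<in>Sn m n. eval_cpoly P n \<sigma> * cnj (eval_cpoly Q n \<sigma>))"

definition valid_cpoly :: "nat \<Rightarrow> cpoly \<Rightarrow> bool" where
  "valid_cpoly m P \<longleftrightarrow> (\<forall>mo\<in>Poly_Mapping.keys P. \<forall>v\<in>Poly_Mapping.keys mo. fst v < m \<and> snd v \<ge> 1)"

end

theory Submission
  imports Defs
begin

text \<open>
  Evaluated at \<open>\<sigma>\<close>, a polynomial in the variables X_k^(i) depends only on the cycle counts of
  the components \<open>\<sigma>\<^sub>i\<close>. Expanding \<open>P \<cdot> cnj Q\<close> into products of monomials, its mean over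
  S_n factors into means over the single symmetric groups S_(n_i) of polynomials in the cycle
  counts of weighted degree at most a_i + b_i, the count of k-cycles having weight k.

  For a function f of the cycle counts let A_n f be its mean over S_n, and let f_L be f after
  adding one L-cycle. Splitting off the cycle through one point, and using that a (j+1)-set has
  j! cyclic permutations, gives (n+1) A_(n+1) f = \<Sum>_(j \<le> n) A_(n-j) f_(j+1). If f has degree
  d, then f_L - f has degree d - L, and f_L = f when L > d; induction on d along this recursion
  shows A_(n+1) f = A_n f for n \<ge> d.
\<close>

section \<open>Weighted degree of functions of cycle counts\<close>

definition add_cycle :: "nat \<Rightarrow> (nat \<Rightarrow> nat) \<Rightarrow> nat \<Rightarrow> nat" where
  "add_cycle L X = X(L := Suc (X L))"

lemma add_cycle_commute: "add_cycle L (add_cycle M X) = add_cycle M (add_cycle L X)"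
  by (auto simp: add_cycle_def fun_eq_iff)

text \<open>Weighted degree at most \<open>d\<close>, with \<open>X k\<close> of weight \<open>k\<close>, characterised by finite differences.\<close>

inductive weighted_deg_le :: "nat \<Rightarrow> ((nat \<Rightarrow> nat) \<Rightarrow> 'a::comm_ring_1) \<Rightarrow> bool" where
  weighted_deg_leI:
    "(\<And>L. 1 \<le> L \<Longrightarrow> L \<le> d \<Longrightarrow> weighted_deg_le (d - L) (\<lambda>X. f (add_cycle L X) - f X))
      \<Longrightarrow> (\<And>L X. d < L \<Longrightarrow> f (add_cycle L X) = f X) \<Longrightarrow> weighted_deg_le d f"

lemma weighted_deg_le_diff:
  "weighted_deg_le d f \<Longrightarrow> 1 \<le> L \<Longrightarrow> L \<le> d
    \<Longrightarrow> weighted_deg_le (d - L) (\<lambda>X. f (add_cycle L X) - f X)"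
  by (auto elim: weighted_deg_le.cases)

lemma weighted_deg_le_invariant: "weighted_deg_le d f \<Longrightarrow> d < L \<Longrightarrow> f (add_cycle L X) = f X"
  by (auto elim: weighted_deg_le.cases)

lemma weighted_deg_le_const: "weighted_deg_le d (\<lambda>_. c)"
proof (induction d arbitrary: c rule: less_induct)
  case (less d)
  show ?case
    by (rule weighted_deg_leI) (use less[of _ 0] in auto)
qed

lemma weighted_deg_le_zero: "(\<And>X. f X = 0) \<Longrightarrow> weighted_deg_le d f"
  using weighted_deg_le_const[of d 0] by (metis ext)

lemma weighted_deg_le_add_cycle:
  "weighted_deg_le d f \<Longrightarrow> weighted_deg_le d (\<lambda>X. f (add_cycle M X))"
proof (induction rule: weighted_deg_le.induct)
  case (weighted_deg_leI d f)
  show ?case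
    by (rule weighted_deg_le.weighted_deg_leI)
      (use weighted_deg_leI in \<open>simp_all add: add_cycle_commute\<close>)
qed

lemma weighted_deg_le_add:
  "weighted_deg_le d f \<Longrightarrow> weighted_deg_le d g \<Longrightarrow> weighted_deg_le d (\<lambda>X. f X + g X)"
proof (induction d arbitrary: f g rule: less_induct)
  case (less d)
  show ?case
  proof (rule weighted_deg_leI)
    fix L assume L: "1 \<le> L" "L \<le> d"
    have "weighted_deg_le (d - L) (\<lambda>X. (f (add_cycle L X) - f X) + (g (add_cycle L X) - g X))"
      using L less by (intro less.IH weighted_deg_le_diff) auto
    then show "weighted_deg_le (d - L) (\<lambda>X. f (add_cycle L X) + g (add_cycle L X) - (f X + g X))"
      by (simp add: algebra_simps)
  qed (simp add: weighted_deg_le_invariant[OF less.prems(1)] weighted_deg_le_invariant[OF less.prems(2)])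
qed

text \<open>Discrete Leibniz rule: \<open>\<Delta>(fg) = \<Delta>f \<cdot> g(\<cdot> + L) + f \<cdot> \<Delta>g\<close>.\<close>

lemma weighted_deg_le_mult:
  "weighted_deg_le d1 f \<Longrightarrow> weighted_deg_le d2 g \<Longrightarrow> weighted_deg_le (d1 + d2) (\<lambda>X. f X * g X)"
proof (induction "d1 + d2" arbitrary: d1 d2 f g rule: less_induct)
  case less
  show ?case
  proof (rule weighted_deg_leI)
    fix L assume L: "1 \<le> L" "L \<le> d1 + d2"
    have left: "weighted_deg_le (d1 + d2 - L) (\<lambda>X. (f (add_cycle L X) - f X) * g (add_cycle L X))"
    proof (cases "L \<le> d1")
      case True
      then have "weighted_deg_le (d1 - L + d2) (\<lambda>X. (f (add_cycle L X) - f X) * g (add_cycle L X))"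
        using L less.prems
        by (intro less.hyps weighted_deg_le_diff weighted_deg_le_add_cycle) auto
      then show ?thesis using True by (simp add: add.commute add_diff_assoc2)
    next
      case False
      then show ?thesis
        by (intro weighted_deg_le_zero) (simp add: weighted_deg_le_invariant[OF less.prems(1)])
    qed
    have right: "weighted_deg_le (d1 + d2 - L) (\<lambda>X. f X * (g (add_cycle L X) - g X))"
    proof (cases "L \<le> d2")
      case True
      then have "weighted_deg_le (d1 + (d2 - L)) (\<lambda>X. f X * (g (add_cycle L X) - g X))"
        using L less.prems by (intro less.hyps weighted_deg_le_diff) auto
      then show ?thesis using True by simp
    next
      case False
      then show ?thesis
        by (intro weighted_deg_le_zero) (simp add: weighted_deg_le_invariant[OF less.prems(2)])
    qed
    show "weighted_deg_le (d1 + d2 - L) (\<lambda>X. f (add_cycle L X) * g (add_cycle L X) - f X * g X)"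
      using weighted_deg_le_add[OF left right] by (simp add: algebra_simps)
  qed (simp add: weighted_deg_le_invariant[OF less.prems(1)] weighted_deg_le_invariant[OF less.prems(2)])
qed

lemma weighted_deg_le_var: "1 \<le> k \<Longrightarrow> weighted_deg_le k (\<lambda>X. of_nat (X k))"
proof (rule weighted_deg_leI)
  fix L assume "1 \<le> L" "L \<le> k"
  show "weighted_deg_le (k - L) (\<lambda>X. of_nat (add_cycle L X k) - of_nat (X k))"
    by (cases "L = k") (auto simp: add_cycle_def weighted_deg_le_const intro: weighted_deg_le_zero)
qed (simp add: add_cycle_def)

lemma weighted_deg_le_power: "weighted_deg_le d f \<Longrightarrow> weighted_deg_le (e * d) (\<lambda>X. f X ^ e)"
  by (induction e) (simp_all add: weighted_deg_le_const weighted_deg_le_mult)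

lemma weighted_deg_le_prod:
  "finite A \<Longrightarrow> (\<And>v. v \<in> A \<Longrightarrow> weighted_deg_le (d v) (F v))
    \<Longrightarrow> weighted_deg_le (\<Sum>v\<in>A. d v) (\<lambda>X. \<Prod>v\<in>A. F v X)"
  by (induction A rule: finite_induct) (simp_all add: weighted_deg_le_const weighted_deg_le_mult)

section \<open>Cycle types and sums over permutations\<close>

definition cycle_type :: "'a set \<Rightarrow> ('a \<Rightarrow> 'a) \<Rightarrow> nat \<Rightarrow> nat" where
  "cycle_type S p k = card {orbit p x | x. x \<in> S \<and> card (orbit p x) = k}"

definition perm_sum :: "'a set \<Rightarrow> ((nat \<Rightarrow> nat) \<Rightarrow> 'b::comm_monoid_add) \<Rightarrow> 'b" where
  "perm_sum S f = (\<Sum>p | p permutes S. f (cycle_type S p))"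

definition cyclic_perms :: "'a set \<Rightarrow> ('a \<Rightarrow> 'a) set" where
  "cyclic_perms T = {c. c permutes T \<and> cyclic_on c T}"

text \<open>The transport of permutations used by \<open>bij_betw_permutations\<close>.\<close>

abbreviation transport_perm :: "('a \<Rightarrow> 'b) \<Rightarrow> 'a set \<Rightarrow> 'b set \<Rightarrow> ('a \<Rightarrow> 'a) \<Rightarrow> 'b \<Rightarrow> 'b" where
  "transport_perm h A B p \<equiv> (\<lambda>x. if x \<in> B then h (p (inv_into A h x)) else x)"

lemma transport_perm_apply:
  assumes "bij_betw h A B" "p permutes A" "x \<in> A"
  shows "transport_perm h A B p (h x) = h (p x)"
proof -
  have "h x \<in> B" using assms(1,3) bij_betwE by blast
  then show ?thesis using assms(1,3) by (simp add: bij_betw_inv_into_left)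
qed

lemma orbit_transport_perm:
  assumes "bij_betw h A B" "p permutes A" "x \<in> A" "finite A"
  shows "orbit (transport_perm h A B p) (h x) = h ` orbit p x"
proof -
  have "h ` orbit p x = orbit (transport_perm h A B p) (h x)"
  proof (rule orbit_inverse)
    show "x \<in> orbit p x"
      by (rule permutation_self_in_orbit[OF permutes_imp_permutation[OF assms(4,2)]])
    fix z assume "z \<in> orbit p x"
    then have "z \<in> A" using permutes_orbit_subset[OF assms(2,3)] by blast
    then show "transport_perm h A B p (h z) = h (p z)"
      by (rule transport_perm_apply[OF assms(1,2)])
  qed
  then show ?thesis by simp
qed

lemma cycle_type_transport_perm:
  assumes "bij_betw h A B" "p permutes A" "finite A"
  shows "cycle_type B (transport_perm h A B p) = cycle_type A p"
proof
  fix k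
  let ?q = "transport_perm h A B p"
  let ?O = "{orbit p x | x. x \<in> A \<and> card (orbit p x) = k}"
  have inj: "inj_on h A" using assms(1) bij_betw_imp_inj_on by blast
  have sub: "\<And>x. x \<in> A \<Longrightarrow> orbit p x \<subseteq> A" using permutes_orbit_subset[OF assms(2)] by blast
  have card_img: "\<And>x. x \<in> A \<Longrightarrow> card (h ` orbit p x) = card (orbit p x)"
    using inj sub by (meson card_image inj_on_subset)
  have "{orbit ?q y | y. y \<in> B \<and> card (orbit ?q y) = k}
      = {orbit ?q (h x) | x. x \<in> A \<and> card (orbit ?q (h x)) = k}"
    using bij_betw_imp_surj_on[OF assms(1)] by blast
  also have "\<dots> = {h ` orbit p x | x. x \<in> A \<and> card (h ` orbit p x) = k}"
    using orbit_transport_perm[OF assms(1,2) _ assms(3)] by (metis (no_types, lifting))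
  also have "\<dots> = {h ` orbit p x | x. x \<in> A \<and> card (orbit p x) = k}"
    using card_img by metis
  also have "\<dots> = image h ` ?O" by blast
  finally have "{orbit ?q y | y. y \<in> B \<and> card (orbit ?q y) = k} = image h ` ?O" .
  moreover have "inj_on (image h) ?O"
    by (rule inj_on_subset[OF inj_on_image_Pow[OF inj]]) (use sub in auto)
  ultimately show "cycle_type B ?q k = cycle_type A p k"
    unfolding cycle_type_def by (simp add: card_image)
qed

lemma perm_sum_bij_betw:
  assumes "bij_betw h A B" "finite A"
  shows "perm_sum A f = perm_sum B f"
proof -
  have "perm_sum B f = (\<Sum>p | p permutes A. f (cycle_type B (transport_perm h A B p)))"
    unfolding perm_sum_def
    by (rule sum.reindex_bij_betw[symmetric, OF bij_betw_permutations[OF assms(1)]])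
  also have "\<dots> = perm_sum A f"
    unfolding perm_sum_def by (rule sum.cong) (use cycle_type_transport_perm[OF assms(1) _ assms(2)] in auto)
  finally show ?thesis by simp
qed

lemma perm_sum_eq_lessThan_card:
  assumes "finite S" shows "perm_sum S f = perm_sum {..<card S} f"
proof -
  obtain h where "bij_betw h S {..<card S}" using finite_same_card_bij[OF assms, of "{..<card S}"] by auto
  then show ?thesis using assms by (rule perm_sum_bij_betw)
qed

lemma cyclic_on_transport_perm:
  assumes "bij_betw h A B" "c permutes A" "cyclic_on c A"
  shows "cyclic_on (transport_perm h A B c) B"
proof -
  have "cyclic_on (transport_perm h A B c) (h ` A)"
  proof (rule cyclic_on_image[OF assms(3)])
    fix x assume "x \<in> A"
    then show "transport_perm h A B c (h x) = h (c x)"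
      by (rule transport_perm_apply[OF assms(1,2)])
  qed
  then show ?thesis using assms(1) bij_betw_imp_surj_on by blast
qed

lemma bij_betw_cyclic_perms:
  assumes "bij_betw h A B"
  shows "bij_betw (transport_perm h A B) (cyclic_perms A) (cyclic_perms B)"
proof -
  let ?g = "\<lambda>p x. if x \<in> A then inv_into A h (p (h x)) else x"
  have bij_inv: "bij_betw (inv_into A h) B A" by (rule bij_betw_inv_into[OF assms])
  have g_eq: "?g p = transport_perm (inv_into A h) B A p" for p
    using assms by (simp add: inv_into_inv_into_eq cong: if_cong)
  show ?thesis unfolding cyclic_perms_def
  proof (rule bij_betw_byWitness[of _ ?g], goal_cases)
    case 1
    then show ?case using assms
      by (force simp: fun_eq_iff permutes_not_in permutes_in_image bij_betw_inv_into_left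
          dest: bij_betwE)
  next
    case 2
    then show ?case using assms bij_inv
      by (force simp: fun_eq_iff permutes_not_in permutes_in_image bij_betw_inv_into_right
          dest: bij_betwE)
  next
    case 3
    show ?case using permutes_bij_inv_into[OF _ assms] cyclic_on_transport_perm[OF assms] by auto
  next
    case 4
    show ?case
      using permutes_bij_inv_into[OF _ bij_inv] cyclic_on_transport_perm[OF bij_inv]
      by (auto simp: g_eq)
  qed
qed

lemma card_cyclic_perms_eq_lessThan_card:
  assumes "finite S" shows "card (cyclic_perms S) = card (cyclic_perms {..<card S})"
proof -
  obtain h where "bij_betw h S {..<card S}" using finite_same_card_bij[OF assms, of "{..<card S}"] by auto
  then show ?thesis by (rule bij_betw_same_card[OF bij_betw_cyclic_perms])
qed

lemma perm_restrict_orbit_in_cyclic_perms: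
  assumes "p permutes S" "finite S" "b \<in> S"
  shows "perm_restrict p (orbit p b) \<in> cyclic_perms (orbit p b)"
proof -
  let ?T = "orbit p b"
  have cyc: "cyclic_on p ?T" by (rule cyclic_on_orbit[OF assms(1,2)])
  have fin: "finite ?T" using permutes_orbit_subset[OF assms(1,3)] assms(2) finite_subset by blast
  have inj: "inj_on p ?T" using permutes_inj_on[OF assms(1)] .
  have "p ` ?T \<subseteq> ?T" using cyclic_on_inI[OF cyc] by blast
  then have "p ` ?T = ?T" by (rule endo_inj_surj[OF fin _ inj])
  then have "bij_betw p ?T ?T" using inj by (simp add: bij_betw_def)
  then have "bij_betw (perm_restrict p ?T) ?T ?T"
    by (rule bij_betw_cong[THEN iffD1, rotated]) (simp add: perm_restrict_simps)
  then have "perm_restrict p ?T permutes ?T"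
    by (rule bij_imp_permutes) (simp add: perm_restrict_simps)
  moreover have "cyclic_on (perm_restrict p ?T) ?T"
    using cyc cyclic_on_perm_restrict by blast
  ultimately show ?thesis by (simp add: cyclic_perms_def)
qed

lemma orbit_perm_restrict_Diff:
  assumes "p permutes S" "cyclic_on p T" "x \<in> S - T"
  shows "orbit (perm_restrict p (S - T)) x = orbit p x"
proof (rule orbit_cong0[OF assms(3)])
  have q: "perm_restrict p (S - T) permutes S - T" by (rule perm_restrict_diff_cyclic[OF assms(1,2)])
  show "perm_restrict p (S - T) \<in> S - T \<rightarrow> S - T"
    using permutes_in_image[OF q] by (simp add: Pi_iff)
qed (simp add: perm_restrict_simps)

lemma cycle_type_remove_orbit:
  assumes "p permutes S" "finite S" "b \<in> S"
  defines "T \<equiv> orbit p b"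
  shows "cycle_type S p = add_cycle (card T) (cycle_type (S - T) (perm_restrict p (S - T)))"
proof
  fix k
  let ?q = "perm_restrict p (S - T)"
  define B where "B = {orbit ?q x | x. x \<in> S - T \<and> card (orbit ?q x) = k}"
  have cyc: "cyclic_on p T" unfolding T_def by (rule cyclic_on_orbit[OF assms(1,2)])
  have sub: "T \<subseteq> S" unfolding T_def by (rule permutes_orbit_subset[OF assms(1,3)])
  have bT: "b \<in> T" unfolding T_def
    by (rule permutation_self_in_orbit[OF permutes_imp_permutation[OF assms(2,1)]])
  have q: "?q permutes S - T" by (rule perm_restrict_diff_cyclic[OF assms(1) cyc])
  have "{orbit p x | x. x \<in> S \<and> card (orbit p x) = k}
      = {orbit p x | x. x \<in> T \<and> card (orbit p x) = k} \<union> {orbit p x | x. x \<in> S - T \<and> card (orbit p x) = k}"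
    using sub by blast
  also have "{orbit p x | x. x \<in> T \<and> card (orbit p x) = k} = (if card T = k then {T} else {})"
    using orbit_cyclic_eq3[OF cyc] bT by auto
  also have "{orbit p x | x. x \<in> S - T \<and> card (orbit p x) = k} = B"
    unfolding B_def using orbit_perm_restrict_Diff[OF assms(1) cyc] by (metis (no_types, lifting))
  finally have split: "{orbit p x | x. x \<in> S \<and> card (orbit p x) = k}
      = (if card T = k then insert T B else B)" by auto
  have "T \<notin> B" unfolding B_def using permutes_orbit_subset[OF q] bT by blast
  moreover have "finite B" unfolding B_def
    by (rule finite_subset[of _ "(\<lambda>x. orbit ?q x) ` (S - T)"]) (use assms(2) in auto)
  moreover have "cycle_type (S - T) ?q k = card B" by (simp add: cycle_type_def B_def)
  ultimately show "cycle_type S p k = add_cycle (card T) (cycle_type (S - T) ?q) k"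
    unfolding cycle_type_def split add_cycle_def by auto
qed

lemma compose_cyclic_perm:
  assumes "finite S" "b \<in> T" "T \<subseteq> S" "c \<in> cyclic_perms T" "q permutes S - T"
  shows "q \<circ> c permutes S" "orbit (q \<circ> c) b = T"
    "perm_restrict (q \<circ> c) T = c" "perm_restrict (q \<circ> c) (S - T) = q"
proof -
  have c: "c permutes T" and cyc: "cyclic_on c T" using assms(4) by (auto simp: cyclic_perms_def)
  show "q \<circ> c permutes S"
    using permutes_compose[OF permutes_subset[OF c assms(3)] permutes_subset[OF assms(5)]] by blast
  have on_T: "q (c x) = c x" if "x \<in> T" for x
    using permutes_in_image[OF c] permutes_not_in[OF assms(5)] that by simp
  have off_T: "q (c x) = q x" if "x \<notin> T" for x
    using permutes_not_in[OF c] that by simp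
  have "orbit (q \<circ> c) b = orbit c b"
    by (rule orbit_cong0[OF assms(2)]) (use on_T permutes_in_image[OF c] in auto)
  also have "\<dots> = T" by (rule orbit_cyclic_eq3[OF cyc assms(2)])
  finally show "orbit (q \<circ> c) b = T" .
  show "perm_restrict (q \<circ> c) T = c"
    by (auto simp: fun_eq_iff perm_restrict_def on_T permutes_not_in[OF c])
  show "perm_restrict (q \<circ> c) (S - T) = q"
    using permutes_not_in[OF assms(5)] by (auto simp: fun_eq_iff perm_restrict_def off_T)
qed

text \<open>A permutation of \<open>S\<close> is the same as its cycle \<open>T\<close> through \<open>b\<close>, a cyclic permutation of \<open>T\<close>
  and a permutation of \<open>S - T\<close>.\<close>

lemma sum_permutes_split_cycle:
  assumes "finite S" "b \<in> S"
  shows "(\<Sum>p | p permutes S. g p)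
      = (\<Sum>(T, c, q) \<in> Sigma {T. b \<in> T \<and> T \<subseteq> S} (\<lambda>T. cyclic_perms T \<times> {q. q permutes S - T}).
          g (q \<circ> c))"
proof (rule sum.reindex_bij_witness[symmetric, where j = "\<lambda>(T, c, q). q \<circ> c"
     and i = "\<lambda>p. (orbit p b, perm_restrict p (orbit p b), perm_restrict p (S - orbit p b))"])
  fix x assume "x \<in> Sigma {T. b \<in> T \<and> T \<subseteq> S} (\<lambda>T. cyclic_perms T \<times> {q. q permutes S - T})"
  then obtain T c q where x: "x = (T, c, q)" "b \<in> T" "T \<subseteq> S" "c \<in> cyclic_perms T"
    "q permutes S - T" by auto
  note qc = compose_cyclic_perm[OF assms(1) x(2-5)]
  show "(case x of (T, c, q) \<Rightarrow> q \<circ> c) \<in> {p. p permutes S}" using qc x by simp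
  show "(orbit (case x of (T, c, q) \<Rightarrow> q \<circ> c) b,
         perm_restrict (case x of (T, c, q) \<Rightarrow> q \<circ> c) (orbit (case x of (T, c, q) \<Rightarrow> q \<circ> c) b),
         perm_restrict (case x of (T, c, q) \<Rightarrow> q \<circ> c) (S - orbit (case x of (T, c, q) \<Rightarrow> q \<circ> c) b)) = x"
    using qc x by simp
next
  fix p assume "p \<in> {p. p permutes S}"
  then have p: "p permutes S" by simp
  have cyc: "cyclic_on p (orbit p b)" by (rule cyclic_on_orbit[OF p assms(1)])
  have sub: "orbit p b \<subseteq> S" by (rule permutes_orbit_subset[OF p assms(2)])
  have "b \<in> orbit p b"
    by (rule permutation_self_in_orbit[OF permutes_imp_permutation[OF assms(1) p]])
  then show "(orbit p b, perm_restrict p (orbit p b), perm_restrict p (S - orbit p b))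
      \<in> Sigma {T. b \<in> T \<and> T \<subseteq> S} (\<lambda>T. cyclic_perms T \<times> {q. q permutes S - T})"
    using perm_restrict_orbit_in_cyclic_perms[OF p assms] perm_restrict_diff_cyclic[OF p cyc] sub
    by auto
  have "perm_restrict p (S - orbit p b) \<circ> perm_restrict p (orbit p b)
      = perm_restrict p ((S - orbit p b) \<union> orbit p b)"
    by (rule perm_restrict_comp[OF _ cyc]) auto
  also have "\<dots> = p" using sub perm_restrict_id[OF p] by (simp add: Un_absorb2)
  finally show "(case (orbit p b, perm_restrict p (orbit p b), perm_restrict p (S - orbit p b)) of
        (T, c, q) \<Rightarrow> q \<circ> c) = p" by simp
qed (simp split: prod.splits)

lemma perm_sum_split_cycle:
  fixes f :: "(nat \<Rightarrow> nat) \<Rightarrow> 'b::comm_semiring_1"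
  assumes "finite S" "b \<in> S"
  shows "perm_sum S f = (\<Sum>T | b \<in> T \<and> T \<subseteq> S.
            of_nat (card (cyclic_perms T)) * perm_sum (S - T) (\<lambda>X. f (add_cycle (card T) X)))"
proof -
  let ?Ts = "{T. b \<in> T \<and> T \<subseteq> S}"
  let ?I = "Sigma ?Ts (\<lambda>T. cyclic_perms T \<times> {q. q permutes S - T})"
  have fin_Ts: "finite ?Ts" by (rule finite_subset[of _ "Pow S"]) (use assms(1) in auto)
  have fin_cyc: "finite (cyclic_perms T)" if "T \<subseteq> S" for T
    using finite_subset[OF that assms(1)] unfolding cyclic_perms_def
    by (rule finite_subset[rotated, OF finite_permutations]) auto
  have fin_q: "finite {q. q permutes S - T}" for T using assms(1) by (simp add: finite_permutations)
  have "perm_sum S f = (\<Sum>(T, c, q)\<in>?I. f (cycle_type S (q \<circ> c)))"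
    unfolding perm_sum_def by (rule sum_permutes_split_cycle[OF assms])
  also have "\<dots> = (\<Sum>(T, c, q)\<in>?I. f (add_cycle (card T) (cycle_type (S - T) q)))"
  proof (rule sum.cong[OF refl], clarify)
    fix T c q assume "b \<in> T" "T \<subseteq> S" "c \<in> cyclic_perms T" "q permutes S - T"
    note qc = compose_cyclic_perm[OF assms(1) this]
    show "f (cycle_type S (q \<circ> c)) = f (add_cycle (card T) (cycle_type (S - T) q))"
      using cycle_type_remove_orbit[OF qc(1) assms] qc by simp
  qed
  also have "\<dots> = (\<Sum>T\<in>?Ts. \<Sum>(c, q)\<in>cyclic_perms T \<times> {q. q permutes S - T}.
      f (add_cycle (card T) (cycle_type (S - T) q)))"
    by (subst sum.Sigma) (use fin_Ts fin_cyc fin_q in auto)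
  also have "\<dots> = (\<Sum>T\<in>?Ts. of_nat (card (cyclic_perms T)) * perm_sum (S - T) (\<lambda>X. f (add_cycle (card T) X)))"
    by (simp add: perm_sum_def sum.cartesian_product[symmetric] sum_distrib_left)
  finally show ?thesis .
qed

lemma sum_Pow_card:
  fixes G :: "nat \<Rightarrow> 'a::comm_semiring_1"
  assumes "finite A"
  shows "(\<Sum>U\<in>Pow A. G (card U)) = (\<Sum>j\<le>card A. of_nat (card A choose j) * G j)"
proof -
  have "(\<Sum>U\<in>Pow A. G (card U)) = (\<Sum>j\<le>card A. \<Sum>U | U \<in> Pow A \<and> card U = j. G (card U))"
    by (rule sum.group[symmetric]) (use assms card_mono in auto)
  also have "\<dots> = (\<Sum>j\<le>card A. of_nat (card A choose j) * G j)"
  proof (rule sum.cong[OF refl])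
    fix j
    have "(\<Sum>U | U \<in> Pow A \<and> card U = j. G (card U)) = (\<Sum>U | U \<subseteq> A \<and> card U = j. G j)"
      by (rule sum.cong) auto
    also have "\<dots> = of_nat (card A choose j) * G j" using n_subsets[OF assms, of j] by simp
    finally show "(\<Sum>U | U \<in> Pow A \<and> card U = j. G (card U)) = of_nat (card A choose j) * G j" .
  qed
  finally show ?thesis .
qed

lemma sum_supsets_card:
  fixes G :: "nat \<Rightarrow> 'a::comm_semiring_1"
  assumes "finite S" "b \<in> S"
  shows "(\<Sum>T | b \<in> T \<and> T \<subseteq> S. G (card T))
       = (\<Sum>j\<le>card S - 1. of_nat (card S - 1 choose j) * G (Suc j))"
proof -
  let ?A = "S - {b}"
  have "{T. b \<in> T \<and> T \<subseteq> S} = insert b ` Pow ?A"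
  proof
    show "{T. b \<in> T \<and> T \<subseteq> S} \<subseteq> insert b ` Pow ?A"
    proof
      fix T assume "T \<in> {T. b \<in> T \<and> T \<subseteq> S}"
      then have "T = insert b (T - {b})" "T - {b} \<in> Pow ?A" by auto
      then show "T \<in> insert b ` Pow ?A" by blast
    qed
  qed (use assms(2) in auto)
  moreover have "inj_on (insert b) (Pow ?A)"
    by (rule inj_onI) (metis Diff_insert_absorb PowD subset_Diff_insert)
  ultimately have "(\<Sum>T | b \<in> T \<and> T \<subseteq> S. G (card T)) = (\<Sum>U\<in>Pow ?A. G (card (insert b U)))"
    by (simp add: sum.reindex)
  also have "\<dots> = (\<Sum>U\<in>Pow ?A. G (Suc (card U)))"
  proof (rule sum.cong[OF refl])
    fix U assume "U \<in> Pow ?A"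
    then have "finite U" "b \<notin> U" using assms(1) finite_subset by auto
    then show "G (card (insert b U)) = G (Suc (card U))" by simp
  qed
  also have "\<dots> = (\<Sum>j\<le>card ?A. of_nat (card ?A choose j) * G (Suc j))"
    using assms(1) by (intro sum_Pow_card) simp
  also have "card ?A = card S - 1" using assms by simp
  finally show ?thesis .
qed

lemma perm_sum_lessThan_Suc:
  fixes f :: "(nat \<Rightarrow> nat) \<Rightarrow> 'b::comm_semiring_1"
  shows "perm_sum {..<Suc n} f = (\<Sum>j\<le>n. of_nat (n choose j) *
      (of_nat (card (cyclic_perms {..<Suc j})) * perm_sum {..<n - j} (\<lambda>X. f (add_cycle (Suc j) X))))"
proof -
  let ?S = "{..<Suc n}"
  let ?G = "\<lambda>L. of_nat (card (cyclic_perms {..<L})) * perm_sum {..<Suc n - L} (\<lambda>X. f (add_cycle L X))"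
  have "perm_sum ?S f = (\<Sum>T | n \<in> T \<and> T \<subseteq> ?S.
      of_nat (card (cyclic_perms T)) * perm_sum (?S - T) (\<lambda>X. f (add_cycle (card T) X)))"
    by (rule perm_sum_split_cycle) auto
  also have "\<dots> = (\<Sum>T | n \<in> T \<and> T \<subseteq> ?S. ?G (card T))"
  proof (rule sum.cong[OF refl])
    fix T assume T: "T \<in> {T. n \<in> T \<and> T \<subseteq> ?S}"
    then have fin: "finite T" using finite_subset by blast
    have "card (?S - T) = Suc n - card T" using T fin by (simp add: card_Diff_subset)
    then show "of_nat (card (cyclic_perms T)) * perm_sum (?S - T) (\<lambda>X. f (add_cycle (card T) X))
        = ?G (card T)"
      unfolding perm_sum_eq_lessThan_card[OF finite_Diff[OF finite_lessThan]]
        card_cyclic_perms_eq_lessThan_card[OF fin] by simp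
  qed
  also have "\<dots> = (\<Sum>j\<le>n. of_nat (n choose j) * ?G (Suc j))"
    by (subst sum_supsets_card) auto
  finally show ?thesis by simp
qed

lemma perm_sum_one: "finite S \<Longrightarrow> perm_sum S (\<lambda>_. 1 :: nat) = fact (card S)"
  by (simp add: perm_sum_def card_permutations)

lemma card_cyclic_perms_lessThan_Suc: "card (cyclic_perms {..<Suc n}) = fact n"
proof (induction n rule: less_induct)
  case (less n)
  have "fact (Suc n) = (\<Sum>j\<le>n. (n choose j) * (card (cyclic_perms {..<Suc j}) * fact (n - j)))"
    using perm_sum_lessThan_Suc[of n "\<lambda>_. 1 :: nat"]
    unfolding perm_sum_one[OF finite_lessThan] card_lessThan of_nat_id .
  also have "\<dots> = (\<Sum>j<n. fact n) + card (cyclic_perms {..<Suc n})"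
  proof -
    have "(n choose j) * (card (cyclic_perms {..<Suc j}) * fact (n - j)) = fact n" if "j < n" for j
      using less[OF that] binomial_fact_lemma[of j n] that by (simp add: mult_ac)
    then show ?thesis by (simp add: lessThan_Suc_atMost[symmetric])
  qed
  finally show ?case by simp
qed

section \<open>Means over symmetric groups\<close>

definition perm_avg :: "nat \<Rightarrow> ((nat \<Rightarrow> nat) \<Rightarrow> 'a::field_char_0) \<Rightarrow> 'a" where
  "perm_avg n f = perm_sum {..<n} f / fact n"

lemma perm_avg_add: "perm_avg n (\<lambda>X. f X + g X) = perm_avg n f + perm_avg n g"
  by (simp add: perm_avg_def perm_sum_def sum.distrib add_divide_distrib)

lemma perm_avg_zero [simp]: "perm_avg n (\<lambda>_. 0) = 0"
  by (simp add: perm_avg_def perm_sum_def)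

lemma perm_avg_rec:
  "of_nat (Suc n) * perm_avg (Suc n) f = (\<Sum>j\<le>n. perm_avg (n - j) (\<lambda>X. f (add_cycle (Suc j) X)))"
proof -
  have summand: "of_nat (n choose j) * (fact j * perm_sum {..<n - j} g) = fact n * perm_avg (n - j) g"
    if "j \<le> n" for j and g :: "(nat \<Rightarrow> nat) \<Rightarrow> 'a"
  proof -
    have "(of_nat (n choose j) * fact j * fact (n - j) :: 'a) = fact n"
      using arg_cong[OF binomial_fact_lemma[OF that], of "of_nat :: nat \<Rightarrow> 'a"] by (simp add: mult_ac)
    then show ?thesis unfolding perm_avg_def by (simp add: field_simps)
  qed
  have "of_nat (Suc n) * perm_avg (Suc n) f = perm_sum {..<Suc n} f / fact n"
    unfolding perm_avg_def fact_Suc by (simp add: field_simps del: of_nat_Suc)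
  also have "perm_sum {..<Suc n} f = fact n * (\<Sum>j\<le>n. perm_avg (n - j) (\<lambda>X. f (add_cycle (Suc j) X)))"
    unfolding perm_sum_lessThan_Suc card_cyclic_perms_lessThan_Suc sum_distrib_left
    by (rule sum.cong) (simp_all add: summand)
  finally show ?thesis by simp
qed

text \<open>Compare the recursions for \<open>m + 2\<close> and \<open>m + 1\<close> term by term: the hypothesis on the finite
  differences leaves a telescoping sum.\<close>

lemma perm_avg_Suc_Suc_eq:
  fixes f :: "(nat \<Rightarrow> nat) \<Rightarrow> 'a::field_char_0"
  assumes diff_stable: "\<And>j. j \<le> m \<Longrightarrow>
      perm_avg (Suc (m - j)) (\<lambda>X. f (add_cycle (Suc j) X) - f X)
      = perm_avg (m - j) (\<lambda>X. f (add_cycle (Suc j) X) - f X)"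
    and invariant: "\<And>X. f (add_cycle (Suc (Suc m)) X) = f X"
  shows "perm_avg (Suc (Suc m)) f = perm_avg (Suc m) f"
proof -
  let ?A = "\<lambda>k. perm_avg k f"
  let ?g = "\<lambda>j X. f (add_cycle (Suc j) X)"
  have split: "perm_avg k (?g j) = ?A k + perm_avg k (\<lambda>X. ?g j X - f X)" for k j
    using perm_avg_add[of k f "\<lambda>X. ?g j X - f X"] by simp
  have shifted: "perm_avg (Suc m - j) (?g j) = (?A (Suc (m - j)) - ?A (m - j)) + perm_avg (m - j) (?g j)"
    if "j \<le> m" for j
    using split[of "Suc (m - j)" j] split[of "m - j" j] diff_stable[OF that] that
    by (simp add: Suc_diff_le)
  have "of_nat (Suc (Suc m)) * ?A (Suc (Suc m)) = (\<Sum>j\<le>Suc m. perm_avg (Suc m - j) (?g j))"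
    by (rule perm_avg_rec)
  also have "\<dots> = (\<Sum>j\<le>m. perm_avg (Suc m - j) (?g j)) + ?A 0"
    by (simp add: invariant)
  also have "(\<Sum>j\<le>m. perm_avg (Suc m - j) (?g j))
      = (\<Sum>j\<le>m. ?A (Suc (m - j)) - ?A (m - j)) + (\<Sum>j\<le>m. perm_avg (m - j) (?g j))"
    unfolding sum.distrib[symmetric] by (rule sum.cong) (simp_all add: shifted)
  also have "(\<Sum>j\<le>m. ?A (Suc (m - j)) - ?A (m - j)) = ?A (Suc m) - ?A 0"
    using sum.atLeastAtMost_rev[of "\<lambda>i. ?A (Suc i) - ?A i" 0 m] sum_Suc_diff[of 0 m ?A]
    by (simp add: atLeast0AtMost)
  also have "(\<Sum>j\<le>m. perm_avg (m - j) (?g j)) = of_nat (Suc m) * ?A (Suc m)"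
    by (rule perm_avg_rec[symmetric])
  finally have "of_nat (Suc (Suc m)) * ?A (Suc (Suc m)) = of_nat (Suc (Suc m)) * ?A (Suc m)"
    by (simp add: algebra_simps)
  then show ?thesis by (simp del: of_nat_Suc)
qed

lemma perm_avg_Suc_eq:
  fixes f :: "(nat \<Rightarrow> nat) \<Rightarrow> 'a::field_char_0"
  shows "weighted_deg_le d f \<Longrightarrow> d \<le> n \<Longrightarrow> perm_avg (Suc n) f = perm_avg n f"
proof (induction arbitrary: n rule: weighted_deg_le.induct)
  case (weighted_deg_leI d f)
  show ?case
  proof (cases n)
    case 0
    then have "of_nat (Suc 0) * perm_avg (Suc 0) f = perm_avg 0 f"
      using perm_avg_rec[of 0 f] weighted_deg_leI by simp
    then show ?thesis using 0 by simp
  next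
    case (Suc m)
    show ?thesis unfolding Suc
    proof (rule perm_avg_Suc_Suc_eq)
      fix j assume j: "j \<le> m"
      show "perm_avg (Suc (m - j)) (\<lambda>X. f (add_cycle (Suc j) X) - f X)
          = perm_avg (m - j) (\<lambda>X. f (add_cycle (Suc j) X) - f X)"
      proof (cases "Suc j \<le> d")
        case True
        then show ?thesis using weighted_deg_leI.IH[of "Suc j" "m - j"] weighted_deg_leI.prems Suc by simp
      next
        case False
        then show ?thesis using weighted_deg_leI.hyps(2) by simp
      qed
    qed (use weighted_deg_leI Suc in simp)
  qed
qed

lemma perm_avg_eq_weighted_deg:
  fixes f :: "(nat \<Rightarrow> nat) \<Rightarrow> 'a::field_char_0"
  assumes "weighted_deg_le d f" "d \<le> n"
  shows "perm_avg n f = perm_avg d f"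
  using assms(2) by (induction n rule: dec_induct) (simp_all add: perm_avg_Suc_eq[OF assms(1)])

section \<open>Polynomials in the cycle counts\<close>

lemma num_cycles_eq_cycle_type: "num_cycles p n = cycle_type {..<n} p"
  by (simp add: fun_eq_iff num_cycles_def cycle_type_def)

lemma sum_Sn_prod:
  fixes F :: "nat \<Rightarrow> (nat \<Rightarrow> nat) \<Rightarrow> 'a::comm_semiring_1"
  shows "(\<Sum>\<sigma>\<in>Sn m n. \<Prod>i<m. F i (\<sigma> i)) = (\<Prod>i<m. \<Sum>p | p permutes {..<n i}. F i p)"
proof (induction m)
  case 0
  have "Sn 0 n = {\<lambda>_. id}" by (auto simp: Sn_def)
  then show ?case by simp
next
  case (Suc m)
  have "(\<Sum>\<sigma>\<in>Sn (Suc m) n. \<Prod>i<Suc m. F i (\<sigma> i))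
      = (\<Sum>(\<tau>, p)\<in>Sn m n \<times> {p. p permutes {..<n m}}. (\<Prod>i<m. F i (\<tau> i)) * F m p)"
  proof (rule sum.reindex_bij_witness[where j = "\<lambda>\<sigma>. (\<sigma>(m := id), \<sigma> m)" and i = "\<lambda>(\<tau>, p). \<tau>(m := p)"])
    fix x assume "x \<in> Sn m n \<times> {p. p permutes {..<n m}}"
    then obtain \<tau> p where x: "x = (\<tau>, p)" "\<tau> \<in> Sn m n" "p permutes {..<n m}" by auto
    then have "\<tau> m = id" by (simp add: Sn_def)
    then show "((case x of (\<tau>, p) \<Rightarrow> \<tau>(m := p))(m := id), (case x of (\<tau>, p) \<Rightarrow> \<tau>(m := p)) m) = x"
      using x by (auto simp: fun_eq_iff)
    show "(case x of (\<tau>, p) \<Rightarrow> \<tau>(m := p)) \<in> Sn (Suc m) n"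
      using x by (auto simp: Sn_def less_Suc_eq)
  qed (auto simp: Sn_def)
  also have "\<dots> = (\<Sum>\<tau>\<in>Sn m n. \<Prod>i<m. F i (\<tau> i)) * (\<Sum>p | p permutes {..<n m}. F m p)"
    by (simp add: sum.cartesian_product[symmetric] sum_product)
  also have "\<dots> = (\<Prod>i<Suc m. \<Sum>p | p permutes {..<n i}. F i p)"
    using Suc by simp
  finally show ?case .
qed

lemma card_Sn: "card (Sn m n) = (\<Prod>i<m. fact (n i))"
  using sum_Sn_prod[where F = "\<lambda>_ _. 1 :: nat"] by (simp add: card_permutations)

definition eval_monomial :: "((nat \<times> nat) \<Rightarrow>\<^sub>0 nat) \<Rightarrow> (nat \<Rightarrow> nat) \<Rightarrow> (nat \<Rightarrow> nat \<Rightarrow> nat) \<Rightarrow> complex"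
  where "eval_monomial mo n \<sigma> = (\<Prod>v\<in>Poly_Mapping.keys mo.
      of_nat (num_cycles (\<sigma> (fst v)) (n (fst v)) (snd v)) ^ Poly_Mapping.lookup mo v)"

definition monomial_factor :: "((nat \<times> nat) \<Rightarrow>\<^sub>0 nat) \<Rightarrow> nat \<Rightarrow> (nat \<Rightarrow> nat) \<Rightarrow> complex"
  where "monomial_factor mo i X = (\<Prod>v | v \<in> Poly_Mapping.keys mo \<and> fst v = i.
      of_nat (X (snd v)) ^ Poly_Mapping.lookup mo v)"

lemma eval_monomial_eq_prod_factors:
  assumes "\<forall>v\<in>Poly_Mapping.keys mo. fst v < m"
  shows "eval_monomial mo n \<sigma> = (\<Prod>i<m. monomial_factor mo i (cycle_type {..<n i} (\<sigma> i)))"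
proof -
  have "eval_monomial mo n \<sigma> = (\<Prod>i<m. \<Prod>v | v \<in> Poly_Mapping.keys mo \<and> fst v = i.
          of_nat (num_cycles (\<sigma> (fst v)) (n (fst v)) (snd v)) ^ Poly_Mapping.lookup mo v)"
    unfolding eval_monomial_def by (rule prod.group[symmetric]) (use assms in auto)
  also have "\<dots> = (\<Prod>i<m. monomial_factor mo i (cycle_type {..<n i} (\<sigma> i)))"
    unfolding monomial_factor_def num_cycles_eq_cycle_type
    by (intro prod.cong refl) auto
  finally show ?thesis .
qed

lemma weighted_deg_le_monomial_factor:
  assumes "\<forall>v\<in>Poly_Mapping.keys mo. 1 \<le> snd v"
  shows "weighted_deg_le (mono_deg mo i) (monomial_factor mo i)"
  unfolding mono_deg_def monomial_factor_def[abs_def]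
proof (rule weighted_deg_le_prod)
  fix v assume "v \<in> {v \<in> Poly_Mapping.keys mo. fst v = i}"
  then have "1 \<le> snd v" using assms by auto
  then show "weighted_deg_le (snd v * Poly_Mapping.lookup mo v)
      (\<lambda>X. of_nat (X (snd v)) ^ Poly_Mapping.lookup mo v :: complex)"
    using weighted_deg_le_power[OF weighted_deg_le_var] by (simp add: mult.commute)
qed simp

definition Sn_mean :: "nat \<Rightarrow> (nat \<Rightarrow> nat) \<Rightarrow> ((nat \<Rightarrow> nat \<Rightarrow> nat) \<Rightarrow> complex) \<Rightarrow> complex"
  where "Sn_mean m n g = 1 / of_nat (card (Sn m n)) * (\<Sum>\<sigma>\<in>Sn m n. g \<sigma>)"

lemma Sn_mean_eval_monomial_mult:
  assumes "\<forall>v\<in>Poly_Mapping.keys mo. fst v < m" "\<forall>v\<in>Poly_Mapping.keys mo'. fst v < m"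
  shows "Sn_mean m n (\<lambda>\<sigma>. eval_monomial mo n \<sigma> * eval_monomial mo' n \<sigma>)
       = (\<Prod>i<m. perm_avg (n i) (\<lambda>X. monomial_factor mo i X * monomial_factor mo' i X))"
proof -
  have "(\<Sum>\<sigma>\<in>Sn m n. eval_monomial mo n \<sigma> * eval_monomial mo' n \<sigma>)
      = (\<Prod>i<m. perm_sum {..<n i} (\<lambda>X. monomial_factor mo i X * monomial_factor mo' i X))"
    unfolding eval_monomial_eq_prod_factors[OF assms(1)] eval_monomial_eq_prod_factors[OF assms(2)]
      prod.distrib[symmetric] perm_sum_def
    by (rule sum_Sn_prod)
  then show ?thesis
    by (simp add: Sn_mean_def perm_avg_def card_Sn prod_dividef)
qed

lemma inner_S_eq_sum_monomials:
  "inner_S m n P Q = (\<Sum>mo\<in>Poly_Mapping.keys P. \<Sum>mo'\<in>Poly_Mapping.keys Q.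
      Poly_Mapping.lookup P mo * cnj (Poly_Mapping.lookup Q mo') *
      Sn_mean m n (\<lambda>\<sigma>. eval_monomial mo n \<sigma> * eval_monomial mo' n \<sigma>))"
proof -
  have "eval_cpoly P n \<sigma> * cnj (eval_cpoly Q n \<sigma>) = (\<Sum>mo\<in>Poly_Mapping.keys P. \<Sum>mo'\<in>Poly_Mapping.keys Q.
      Poly_Mapping.lookup P mo * cnj (Poly_Mapping.lookup Q mo') *
      (eval_monomial mo n \<sigma> * eval_monomial mo' n \<sigma>))" for \<sigma>
    unfolding eval_cpoly_def eval_monomial_def[symmetric]
    by (simp add: sum_product eval_monomial_def mult_ac)
  then show ?thesis
    unfolding inner_S_def Sn_mean_def by (simp add: sum_distrib_left sum.swap[of _ "Sn m n"] mult_ac)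
qed

lemma Sn_mean_eval_monomial_mult_indep:
  assumes "\<forall>v\<in>Poly_Mapping.keys mo. fst v < m \<and> 1 \<le> snd v"
    and "\<forall>v\<in>Poly_Mapping.keys mo'. fst v < m \<and> 1 \<le> snd v"
    and "\<forall>i<m. mono_deg mo i + mono_deg mo' i \<le> n i" "\<forall>i<m. mono_deg mo i + mono_deg mo' i \<le> n' i"
  shows "Sn_mean m n (\<lambda>\<sigma>. eval_monomial mo n \<sigma> * eval_monomial mo' n \<sigma>)
       = Sn_mean m n' (\<lambda>\<sigma>. eval_monomial mo n' \<sigma> * eval_monomial mo' n' \<sigma>)"
proof -
  have keys: "\<forall>v\<in>Poly_Mapping.keys mo. fst v < m" "\<forall>v\<in>Poly_Mapping.keys mo'. fst v < m"
    using assms(1,2) by auto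
  have "perm_avg (n i) (\<lambda>X. monomial_factor mo i X * monomial_factor mo' i X)
      = perm_avg (n' i) (\<lambda>X. monomial_factor mo i X * monomial_factor mo' i X)" if "i < m" for i
  proof -
    have "weighted_deg_le (mono_deg mo i + mono_deg mo' i)
        (\<lambda>X. monomial_factor mo i X * monomial_factor mo' i X)"
      using assms(1,2) by (intro weighted_deg_le_mult weighted_deg_le_monomial_factor) auto
    then show ?thesis using assms(3,4) that by (metis perm_avg_eq_weighted_deg)
  qed
  then show ?thesis
    unfolding Sn_mean_eval_monomial_mult[OF keys] by (intro prod.cong) auto
qed

theorem mainTheorem20:
  fixes m :: nat and P Q :: cpoly and a b :: "nat \<Rightarrow> nat"
  assumes "m \<ge> 1"
    and "valid_cpoly m P" and "valid_cpoly m Q"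
    and "\<forall>mo\<in>Poly_Mapping.keys P. \<forall>i<m. mono_deg mo i \<le> a i"
    and "\<forall>mo\<in>Poly_Mapping.keys Q. \<forall>i<m. mono_deg mo i \<le> b i"
  shows "\<forall>n n'. (\<forall>i<m. a i + b i \<le> n i) \<and> (\<forall>i<m. a i + b i \<le> n' i)
           \<longrightarrow> inner_S m n P Q = inner_S m n' P Q"
proof (intro allI impI)
  fix n n' :: "nat \<Rightarrow> nat"
  assume n: "(\<forall>i<m. a i + b i \<le> n i) \<and> (\<forall>i<m. a i + b i \<le> n' i)"
  have "Sn_mean m n (\<lambda>\<sigma>. eval_monomial mo n \<sigma> * eval_monomial mo' n \<sigma>)
      = Sn_mean m n' (\<lambda>\<sigma>. eval_monomial mo n' \<sigma> * eval_monomial mo' n' \<sigma>)"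
    if mo: "mo \<in> Poly_Mapping.keys P" and mo': "mo' \<in> Poly_Mapping.keys Q" for mo mo'
  proof (rule Sn_mean_eval_monomial_mult_indep)
    show "\<forall>v\<in>Poly_Mapping.keys mo. fst v < m \<and> 1 \<le> snd v"
      "\<forall>v\<in>Poly_Mapping.keys mo'. fst v < m \<and> 1 \<le> snd v"
      using assms(2,3) mo mo' by (auto simp: valid_cpoly_def)
    have "mono_deg mo i + mono_deg mo' i \<le> a i + b i" if "i < m" for i
      using assms(4,5) mo mo' that by (simp add: add_mono)
    then show "\<forall>i<m. mono_deg mo i + mono_deg mo' i \<le> n i" "\<forall>i<m. mono_deg mo i + mono_deg mo' i \<le> n' i"
      using n order_trans by blast+
  qed
  then show "inner_S m n P Q = inner_S m n' P Q"
    unfolding inner_S_eq_sum_monomials by (intro sum.cong refl) (simp only:)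
qed

end
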